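(* Let $\Phi=\varphi\land\bigwedge RE\land\bigwedge DI$ be an $\mathcal{ALCQIO}_{b,Re}$-formula over $\tau$ with $RE=\{\mathit{Reach}(B_1,S_1,A_1),\dots,\mathit{Reach}(B_h,S_h,A_h)\}$. Then $\mathrm{ORD}(\varphi)$ is non-empty iff there is a (finite) $\tau$-structure $\mathcal{M}$ with $\mathcal{M}\models\varphi$ that has an $h'$-useful labeling for every $1\le h'\le h$.
   Context: Structures are finite; $\tau$ has atomic concepts, atomic roles (a subset $\mathsf{N_F}$ functional, interpreted as partial functions) and nominals; $\tau$ contains all symbols of $\Phi$. $\mathcal{ALCQIO}_b$: concepts built from atomic concepts and nominals using $\sqcap,\sqcup,\neg,\exists r.C,\exists^{\le n}r.C$ for roles atomic or inverse; formulae are Boolean combinations of inclusions $C\sqsubseteq D$ and equalities; standard semantics. A reachability assertion $\mathit{Reach}(B,S,A)$ has atomic concepts $A,B$ and $S\subseteq\mathsf{N_F}$; an $\mathcal{ALCQIO}_{b,Re}$-formula is $\Phi=\varphi\land\bigwedge RE\land\bigwedge DI$ with $\varphi\in\mathcal{ALCQIO}_b$, $RE$ a finite set of reachability assertions, $DI$ a finite set of disjointness assertions $A_1\sqcap A_2\equiv\bot$, compatible (whenever two assertions of $RE$ share a role, their $A$-concepts are declared disjoint in $DI$). $D^{\mathcal{M}}_{h'}$ is the directed graph on vertex set $A_{h'}^{\mathcal{M}}$ with edges $\bigcup_{s\in S_{h'}}s^{\mathcal{M}}\cap(A_{h'}^{\mathcal{M}}\times A_{h'}^{\mathcal{M}})$.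 Types: $\mathrm{Con}(\varphi)$ is the set of concepts occurring in $\varphi$ (including subconcepts), $\mathrm{TYPES}_\varphi$ its power set, $\overline{tp}^{\varphi}_{\mathcal{M}}(u)=\{C\in\mathrm{Con}(\varphi)\mid u\in C^{\mathcal{M}}\}$. Given a finite set $L$ with a strict linear order $<$ of size $|\mathrm{TYPES}_\varphi|$ (by default $[1,|\mathrm{TYPES}_\varphi|]$ with the usual order), an $h'$-useful labeling for $\mathcal{M}$ (with values in $L$) is $f:A_{h'}^{\mathcal{M}}\to L$ such that (1) $f(u)=f(v)$ implies equal types, and (2) for every $u\in A_{h'}^{\mathcal{M}}$, either $u\in B_{h'}^{\mathcal{M}}$ or there are $v,w\in A_{h'}^{\mathcal{M}}$ with $f(u)=f(v)$, $f(w)<f(v)$ and $(w,v)$ an edge of $D^{\mathcal{M}}_{h'}$. $\mathrm{ORD}(\varphi)$: let $k=|\mathrm{TYPES}_\varphi|$ and extend $\tau$ to $\mathit{ext}(\tau)$ by a new atomic concept $M$, new nominals $o_1,\dots,o_k$, a new atomic role $\mathit{ord}$ and new functional roles $f_1,\dots,f_h$. For an $\mathit{ext}(\tau)$-structure $\mathcal{N}$ with universe $N$, let $\mathcal{M}$ be the substructure of $\mathcal{N}$ (restricted to $\tau$) with universe $M^{\mathcal{N}}$, and $O^{\mathcal{N}}=N\setminus M^{\mathcal{N}}$. Then $\mathcal{N}\in\mathrm{ORD}(\varphi)$ iff: (1) $\mathcal{M}\models\varphi$; (2) $N$ is partitioned into $M^{\mathcal{N}}$ and $O^{\mathcal{N}}=\{o_1^{\mathcal{N}},\dots,o_k^{\mathcal{N}}\}$;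 (3) $(o_i^{\mathcal{N}},o_j^{\mathcal{N}})\in\mathit{ord}^{\mathcal{N}}$ iff $i<j$; (4) for every $1\le h'\le h$, $f_{h'}^{\mathcal{N}}$ is a function from $A_{h'}^{\mathcal{M}}$ to $O^{\mathcal{N}}$; (5) for every $1\le h'\le h$, $f_{h'}^{\mathcal{N}}$ is an $h'$-useful labeling for $\mathcal{M}$ with values in $O^{\mathcal{N}}$ ordered by $\mathit{ord}^{\mathcal{N}}$. *)

theory Defs
  imports Main
begin

text \<open>Signature tau: atomic concepts of type 'c, atomic roles of type 'r (with a
  distinguished set NF of functional roles), nominals of type 'n.\<close>

datatype 'r role = RAt 'r | RInv 'r

datatype ('c,'r,'n) concept =
    CAtom 'c
  | CNom 'n
  | CNeg "('c,'r,'n) concept"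
  | CAnd "('c,'r,'n) concept" "('c,'r,'n) concept"
  | COr "('c,'r,'n) concept" "('c,'r,'n) concept"
  | CEx "'r role" "('c,'r,'n) concept"
  | CAtMost nat "'r role" "('c,'r,'n) concept"

datatype ('c,'r,'n) formula =
    FIncl "('c,'r,'n) concept" "('c,'r,'n) concept"
  | FEq "('c,'r,'n) concept" "('c,'r,'n) concept"
  | FNot "('c,'r,'n) formula"
  | FAnd "('c,'r,'n) formula" "('c,'r,'n) formula"
  | FOr "('c,'r,'n) formula" "('c,'r,'n) formula"

fun subcon :: "('c,'r,'n) concept \<Rightarrow> ('c,'r,'n) concept set" where
  "subcon (CAtom a) = {CAtom a}"
| "subcon (CNom nm) = {CNom nm}"
| "subcon (CNeg C) = insert (CNeg C) (subcon C)"
| "subcon (CAnd C D) = insert (CAnd C D) (subcon C \<union> subcon D)"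
| "subcon (COr C D) = insert (COr C D) (subcon C \<union> subcon D)"
| "subcon (CEx r C) = insert (CEx r C) (subcon C)"
| "subcon (CAtMost n r C) = insert (CAtMost n r C) (subcon C)"

fun Con :: "('c,'r,'n) formula \<Rightarrow> ('c,'r,'n) concept set" where
  "Con (FIncl C D) = subcon C \<union> subcon D"
| "Con (FEq C D) = subcon C \<union> subcon D"
| "Con (FNot f) = Con f"
| "Con (FAnd f g) = Con f \<union> Con g"
| "Con (FOr f g) = Con f \<union> Con g"

definition TYPES :: "('c,'r,'n) formula \<Rightarrow> ('c,'r,'n) concept set set" where
  "TYPES phi = Pow (Con phi)"

record ('u,'c,'r,'n) struct =
  univ :: "'u set"
  cI :: "'c \<Rightarrow> 'u set"
  rI :: "'r \<Rightarrow> ('u \<times> 'u) set"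
  nI :: "'n \<Rightarrow> 'u"

definition is_struct :: "'r set \<Rightarrow> ('u,'c,'r,'n) struct \<Rightarrow> bool" where
  "is_struct NF M \<longleftrightarrow>
     finite (univ M) \<and> univ M \<noteq> {} \<and>
     (\<forall>a. cI M a \<subseteq> univ M) \<and>
     (\<forall>r. rI M r \<subseteq> univ M \<times> univ M) \<and>
     (\<forall>nm. nI M nm \<in> univ M) \<and>
     (\<forall>r\<in>NF. single_valued (rI M r))"

fun roleI :: "('u,'c,'r,'n) struct \<Rightarrow> 'r role \<Rightarrow> ('u \<times> 'u) set" where
  "roleI M (RAt r) = rI M r"
| "roleI M (RInv r) = (rI M r)\<inverse>"

fun cext :: "('u,'c,'r,'n) struct \<Rightarrow> ('c,'r,'n) concept \<Rightarrow> 'u set" where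
  "cext M (CAtom a) = cI M a"
| "cext M (CNom nm) = {nI M nm}"
| "cext M (CNeg C) = univ M - cext M C"
| "cext M (CAnd C D) = cext M C \<inter> cext M D"
| "cext M (COr C D) = cext M C \<union> cext M D"
| "cext M (CEx r C) = {u \<in> univ M. \<exists>v. (u, v) \<in> roleI M r \<and> v \<in> cext M C}"
| "cext M (CAtMost n r C) =
     {u \<in> univ M. card {v. (u, v) \<in> roleI M r \<and> v \<in> cext M C} \<le> n}"

fun models :: "('u,'c,'r,'n) struct \<Rightarrow> ('c,'r,'n) formula \<Rightarrow> bool" where
  "models M (FIncl C D) = (cext M C \<subseteq> cext M D)"
| "models M (FEq C D) = (cext M C = cext M D)"
| "models M (FNot f) = (\<not> models M f)"
| "models M (FAnd f g) = (models M f \<and> models M g)"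
| "models M (FOr f g) = (models M f \<or> models M g)"

definition tp :: "('u,'c,'r,'n) struct \<Rightarrow> ('c,'r,'n) formula \<Rightarrow> 'u \<Rightarrow> ('c,'r,'n) concept set" where
  "tp M phi u = {C \<in> Con phi. u \<in> cext M C}"

text \<open>A reachability assertion Reach(B,S,A) is represented as the triple (B,S,A).
  RE is given as a list [Reach(B_1,S_1,A_1), ..., Reach(B_h,S_h,A_h)];
  the h'-th assertion (1 <= h' <= h) is RE ! (h' - 1).
  A disjointness assertion A1 \<sqinter> A2 \<equiv> \<bottom> is represented as the pair (A1, A2).\<close>

type_synonym ('c,'r) reach = "'c \<times> 'r set \<times> 'c"

definition reachB :: "('c,'r) reach list \<Rightarrow> nat \<Rightarrow> 'c" where
  "reachB RE i = fst (RE ! (i - 1))"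
definition reachS :: "('c,'r) reach list \<Rightarrow> nat \<Rightarrow> 'r set" where
  "reachS RE i = fst (snd (RE ! (i - 1)))"
definition reachA :: "('c,'r) reach list \<Rightarrow> nat \<Rightarrow> 'c" where
  "reachA RE i = snd (snd (RE ! (i - 1)))"

definition ALCQIO_bRe :: "'r set \<Rightarrow> ('c,'r) reach list \<Rightarrow> ('c \<times> 'c) set \<Rightarrow> bool" where
  "ALCQIO_bRe NF RE DI \<longleftrightarrow>
     finite DI \<and>
     (\<forall>i\<in>{1..length RE}. reachS RE i \<subseteq> NF) \<and>
     (\<forall>i\<in>{1..length RE}. \<forall>j\<in>{1..length RE}. i \<noteq> j \<longrightarrow>
        reachS RE i \<inter> reachS RE j \<noteq> {} \<longrightarrow>
        (reachA RE i, reachA RE j) \<in> DI \<or> (reachA RE j, reachA RE i) \<in> DI)"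

text \<open>Edge set of the graph D^M_{h'} (vertex set A_{h'}^M).\<close>
definition Dedges :: "('u,'c,'r,'n) struct \<Rightarrow> ('c,'r) reach list \<Rightarrow> nat \<Rightarrow> ('u \<times> 'u) set" where
  "Dedges M RE i =
     (\<Union>s\<in>reachS RE i. rI M s) \<inter> (cI M (reachA RE i) \<times> cI M (reachA RE i))"

definition useful_labeling ::
  "('c,'r,'n) formula \<Rightarrow> ('c,'r) reach list \<Rightarrow> nat \<Rightarrow> ('u,'c,'r,'n) struct \<Rightarrow>
   'l set \<Rightarrow> ('l \<Rightarrow> 'l \<Rightarrow> bool) \<Rightarrow> ('u \<Rightarrow> 'l) \<Rightarrow> bool" where
  "useful_labeling phi RE i M L lt f \<longleftrightarrow>
     (let A = cI M (reachA RE i) in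
       (\<forall>u\<in>A. f u \<in> L) \<and>
       (\<forall>u\<in>A. \<forall>v\<in>A. f u = f v \<longrightarrow> tp M phi u = tp M phi v) \<and>
       (\<forall>u\<in>A. u \<in> cI M (reachB RE i) \<or>
          (\<exists>v\<in>A. \<exists>w\<in>A. f u = f v \<and> lt (f w) (f v) \<and> (w, v) \<in> Dedges M RE i)))"

text \<open>An ext(tau)-structure: a tau-structure together with interpretations of the new
  atomic concept M, the new nominals o_1..o_k (oN i for 1 <= i <= k), the new atomic
  role ord, and the new functional roles f_1..f_h (fR i for 1 <= i <= h).\<close>
record ('u,'c,'r,'n) ext_struct =
  base :: "('u,'c,'r,'n) struct"
  Mc :: "'u set"
  oN :: "nat \<Rightarrow> 'u"
  ordR :: "('u \<times> 'u) set"
  fR :: "nat \<Rightarrow> ('u \<times> 'u) set"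

definition is_ext_struct :: "'r set \<Rightarrow> nat \<Rightarrow> nat \<Rightarrow> ('u,'c,'r,'n) ext_struct \<Rightarrow> bool" where
  "is_ext_struct NF k h N \<longleftrightarrow>
     is_struct NF (base N) \<and>
     Mc N \<subseteq> univ (base N) \<and>
     (\<forall>i\<in>{1..k}. oN N i \<in> univ (base N)) \<and>
     ordR N \<subseteq> univ (base N) \<times> univ (base N) \<and>
     (\<forall>i\<in>{1..h}. fR N i \<subseteq> univ (base N) \<times> univ (base N) \<and> single_valued (fR N i))"

definition restrict :: "('u,'c,'r,'n) struct \<Rightarrow> 'u set \<Rightarrow> ('u,'c,'r,'n) struct" where
  "restrict N X = \<lparr> univ = X, cI = (\<lambda>a. cI N a \<inter> X), rI = (\<lambda>r. rI N r \<inter> (X \<times> X)),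
                    nI = nI N \<rparr>"

definition ORD :: "'r set \<Rightarrow> ('c,'r) reach list \<Rightarrow> ('c,'r,'n) formula \<Rightarrow>
                   ('u,'c,'r,'n) ext_struct set" where
  "ORD NF RE phi =
    {N. let k = card (TYPES phi); h = length RE; M = restrict (base N) (Mc N);
            Oset = oN N ` {1..k} in
      is_ext_struct NF k h N \<and>
      \<comment> \<open>(1)\<close> is_struct NF M \<and> models M phi \<and>
      \<comment> \<open>(2)\<close> Mc N \<inter> Oset = {} \<and> Mc N \<union> Oset = univ (base N) \<and>
      \<comment> \<open>(3)\<close> (\<forall>i\<in>{1..k}. \<forall>j\<in>{1..k}. (oN N i, oN N j) \<in> ordR N \<longleftrightarrow> i < j) \<and>
      \<comment> \<open>(4)\<close> (\<forall>i\<in>{1..h}. fR N i \<subseteq> cI M (reachA RE i) \<times> Oset \<and>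
                 (\<forall>u\<in>cI M (reachA RE i). \<exists>!x. (u, x) \<in> fR N i)) \<and>
      \<comment> \<open>(5)\<close> (\<forall>i\<in>{1..h}. useful_labeling phi RE i M Oset (\<lambda>x y. (x, y) \<in> ordR N)
                 (\<lambda>u. THE x. (u, x) \<in> fR N i))}"

end

theory Submission
  imports Defs
begin

text \<open>An h'-useful labeling only depends on the labels and on how they compare, so it
  can be moved along any order embedding of label sets. The ordered nominals
  o_1, ..., o_k of a structure in ORD(phi) are such an embedding of [1, k]; conversely,
  any finite model can be extended by k fresh elements, taken from the infinite universe,
  playing the role of the nominals.\<close>

lemma useful_labeling_cong:
  assumes "\<And>u. u \<in> cI M (reachA RE i) \<Longrightarrow> f u = g u"
  shows "useful_labeling phi RE i M L lt f \<longleftrightarrow> useful_labeling phi RE i M L lt g"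
  using assms unfolding useful_labeling_def Let_def Dedges_def by (smt (verit, best))

lemma useful_labeling_order_embedding:
  assumes inj: "inj_on e L"
    and mono: "\<And>x y. x \<in> L \<Longrightarrow> y \<in> L \<Longrightarrow> lt' (e x) (e y) \<longleftrightarrow> lt x y"
    and range: "f ` cI M (reachA RE i) \<subseteq> L"
  shows "useful_labeling phi RE i M (e ` L) lt' (e \<circ> f) \<longleftrightarrow> useful_labeling phi RE i M L lt f"
proof -
  let ?A = "cI M (reachA RE i)"
  have eq: "e (f u) = e (f v) \<longleftrightarrow> f u = f v" if "u \<in> ?A" "v \<in> ?A" for u v
    using inj range that by (auto dest: inj_onD)
  have less: "lt' (e (f u)) (e (f v)) \<longleftrightarrow> lt (f u) (f v)" if "u \<in> ?A" "v \<in> ?A" for u v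
    using mono range that by auto
  show ?thesis
    using range eq less unfolding useful_labeling_def Let_def comp_def
    by (smt (verit, best) image_subset_iff image_eqI)
qed

lemma inj_on_if_order_reflecting:
  fixes g :: "'a::linorder \<Rightarrow> 'b"
  assumes "\<And>i j. i \<in> I \<Longrightarrow> j \<in> I \<Longrightarrow> (g i, g j) \<in> R \<longleftrightarrow> i < j"
  shows "inj_on g I"
proof (rule inj_onI)
  fix i j assume "i \<in> I" "j \<in> I" "g i = g j"
  then show "i = j" using assms by (metis less_asym linorder_neqE)
qed

lemma labelings_if_ORD:
  fixes N :: "('u,'c,'r,'n) ext_struct"
  assumes "N \<in> ORD NF RE phi"
  shows "\<exists>M :: ('u,'c,'r,'n) struct. is_struct NF M \<and> models M phi \<and>
           (\<forall>i\<in>{1..length RE}. \<exists>f :: 'u \<Rightarrow> nat.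
              useful_labeling phi RE i M {1..card (TYPES phi)} (<) f)"
proof -
  define k where "k = card (TYPES phi)"
  define M where "M = restrict (base N) (Mc N)"
  have ord: "\<And>i j. i \<in> {1..k} \<Longrightarrow> j \<in> {1..k} \<Longrightarrow> (oN N i, oN N j) \<in> ordR N \<longleftrightarrow> i < j"
    using assms unfolding ORD_def k_def Let_def by auto
  then have inj: "inj_on (oN N) {1..k}"
    by (rule inj_on_if_order_reflecting)
  have "\<exists>f :: 'u \<Rightarrow> nat. useful_labeling phi RE i M {1..k} (<) f" if i: "i \<in> {1..length RE}" for i
  proof -
    define g where "g = (\<lambda>u. THE x. (u, x) \<in> fR N i)"
    have g: "useful_labeling phi RE i M (oN N ` {1..k}) (\<lambda>x y. (x, y) \<in> ordR N) g"
      using assms i unfolding ORD_def M_def g_def k_def Let_def by auto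
    define f where "f = inv_into {1..k} (oN N) \<circ> g"
    have g_range: "g u \<in> oN N ` {1..k}" if "u \<in> cI M (reachA RE i)" for u
      using g that unfolding useful_labeling_def Let_def by auto
    have f_range: "f ` cI M (reachA RE i) \<subseteq> {1..k}"
      using g_range unfolding f_def by (auto intro: inv_into_into)
    have "useful_labeling phi RE i M (oN N ` {1..k}) (\<lambda>x y. (x, y) \<in> ordR N) (oN N \<circ> f)"
      using g g_range unfolding f_def
      by (subst useful_labeling_cong[where g = g]) (auto simp: f_inv_into_f)
    then show ?thesis
      using useful_labeling_order_embedding[where lt' = "\<lambda>x y. (x, y) \<in> ordR N" and lt = "(<)",
          OF inj ord f_range] by blast
  qed
  moreover have "is_struct NF M" "models M phi"
    using assms unfolding ORD_def M_def Let_def by auto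
  ultimately show ?thesis unfolding k_def by blast
qed

definition ord_extension ::
  "('u,'c,'r,'n) struct \<Rightarrow> ('c,'r) reach list \<Rightarrow> nat \<Rightarrow> (nat \<Rightarrow> 'u) \<Rightarrow> (nat \<Rightarrow> 'u \<Rightarrow> nat) \<Rightarrow>
   ('u,'c,'r,'n) ext_struct" where
  "ord_extension M RE k e F =
     \<lparr>base = \<lparr>univ = univ M \<union> e ` {1..k}, cI = cI M, rI = rI M, nI = nI M\<rparr>,
      Mc = univ M, oN = e,
      ordR = {(e a, e b) | a b. a \<in> {1..k} \<and> b \<in> {1..k} \<and> a < b},
      fR = (\<lambda>i. {(u, e (F i u)) | u. u \<in> cI M (reachA RE i)})\<rparr>"

lemma restrict_ord_extension:
  assumes "is_struct NF M"
  shows "restrict (base (ord_extension M RE k e F)) (Mc (ord_extension M RE k e F)) = M"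
proof -
  have "(\<lambda>a. cI M a \<inter> univ M) = cI M" "(\<lambda>r. rI M r \<inter> (univ M \<times> univ M)) = rI M"
    using assms unfolding is_struct_def by (auto simp: fun_eq_iff)
  then show ?thesis unfolding restrict_def ord_extension_def by simp
qed

lemma ord_extension_in_ORD:
  assumes M: "is_struct NF M" "models M phi"
    and e: "inj e" "range e \<inter> univ M = {}"
    and F: "\<forall>i\<in>{1..length RE}. useful_labeling phi RE i M {1..card (TYPES phi)} (<) (F i)"
  shows "ord_extension M RE (card (TYPES phi)) e F \<in> ORD NF RE phi"
proof -
  define k where "k = card (TYPES phi)"
  define N where "N = ord_extension M RE k e F"
  have F_range: "F i ` cI M (reachA RE i) \<subseteq> {1..k}" if "i \<in> {1..length RE}" for i
    using F that unfolding useful_labeling_def Let_def k_def by auto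
  have ord: "\<And>a b. a \<in> {1..k} \<Longrightarrow> b \<in> {1..k} \<Longrightarrow> (e a, e b) \<in> ordR N \<longleftrightarrow> a < b"
    unfolding N_def ord_extension_def using e(1) by (auto dest: injD)
  have the_fR: "(THE x. (u, x) \<in> fR N i) = (e \<circ> F i) u" if "u \<in> cI M (reachA RE i)" for i u
    using that unfolding N_def ord_extension_def by auto
  have labeling: "useful_labeling phi RE i M (e ` {1..k}) (\<lambda>x y. (x, y) \<in> ordR N)
                    (\<lambda>u. THE x. (u, x) \<in> fR N i)" if i: "i \<in> {1..length RE}" for i
    using useful_labeling_order_embedding[where lt' = "\<lambda>x y. (x, y) \<in> ordR N" and lt = "(<)",
        OF inj_on_subset[OF e(1)] ord F_range[OF i]] F i
    by (subst useful_labeling_cong[OF the_fR]) (auto simp: k_def)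
  have "is_ext_struct NF k (length RE) N"
    using M(1) F_range unfolding is_ext_struct_def is_struct_def N_def ord_extension_def
    by (auto simp: single_valued_def image_subset_iff)
  moreover have "\<forall>i\<in>{1..length RE}. fR N i \<subseteq> cI M (reachA RE i) \<times> e ` {1..k} \<and>
                   (\<forall>u\<in>cI M (reachA RE i). \<exists>!x. (u, x) \<in> fR N i)"
    using F_range unfolding N_def ord_extension_def by (auto simp: image_subset_iff)
  moreover have "Mc N \<inter> e ` {1..k} = {}" "Mc N \<union> e ` {1..k} = univ (base N)"
    using e(2) unfolding N_def ord_extension_def by auto
  ultimately show ?thesis
    using M ord labeling restrict_ord_extension[OF M(1)]
    unfolding ORD_def Let_def N_def k_def by (simp add: ord_extension_def)
qed

theorem lemma9:
  fixes NF :: "'r set"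
    and phi :: "('c,'r,'n) formula"
    and RE :: "('c,'r) reach list"
    and DI :: "('c \<times> 'c) set"
  assumes "infinite (UNIV :: 'u set)"
    and "ALCQIO_bRe NF RE DI"
  shows "(ORD NF RE phi \<noteq> ({} :: ('u,'c,'r,'n) ext_struct set)) \<longleftrightarrow>
         (\<exists>M :: ('u,'c,'r,'n) struct. is_struct NF M \<and> models M phi \<and>
            (\<forall>i\<in>{1..length RE}. \<exists>f :: 'u \<Rightarrow> nat.
               useful_labeling phi RE i M {1..card (TYPES phi)} (<) f))"
    (is "?nonempty \<longleftrightarrow> (\<exists>M. ?labeled M)")
proof
  assume ?nonempty
  then show "\<exists>M. ?labeled M"
    using labelings_if_ORD by blast
next
  assume "\<exists>M. ?labeled M"
  then obtain M :: "('u,'c,'r,'n) struct" and F where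
    M: "is_struct NF M" "models M phi" and
    F: "\<forall>i\<in>{1..length RE}. useful_labeling phi RE i M {1..card (TYPES phi)} (<) (F i)"
    by metis
  have "infinite (UNIV - univ M)"
    using assms(1) M(1) unfolding is_struct_def by auto
  then obtain e :: "nat \<Rightarrow> 'u" where "inj e" "range e \<subseteq> UNIV - univ M"
    using infinite_countable_subset by blast
  then have "ord_extension M RE (card (TYPES phi)) e F \<in> ORD NF RE phi"
    using ord_extension_in_ORD[OF M _ _ F] by blast
  then show ?nonempty by blast
qed

end
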